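(* Let $(X,\|\cdot\|,\preceq)$ be a partially ordered Banach space, with order induced by a cone $P$, that has the upper comparable property. Let $S$ be a nonempty, closed, convex and bounded subset of $X$. Let $A:X\to X$ and $B:S\to X$ be two operators satisfying: (a) there exist a generalized altering distance function $\psi:[0,\infty)\to[0,\infty)$, an upper semi-continuous function $\theta:[0,\infty)\to[0,\infty)$ and a lower semi-continuous function $\varphi:[0,\infty)\to[0,\infty)$ with $\theta(0)=\varphi(0)=0$ and $\psi(t)-\theta(t)+\varphi(t)>0$ for all $t>0$, such that $$\psi(\|Ax-Ay\|)\le \theta(\|x-y\|)-\varphi(\|x-y\|)\quad\text{for all } x,y\in X \text{ with } x\succeq y;$$ (b) there exists $x_0\in X$ with $x_0\preceq Ax_0$; (c) $A$ is continuous and non-decreasing with respect to $\preceq$, and $(I-A)^{-1}$ exists and is continuous; (d) $B$ is continuous and $B(S)$ is contained in a compact subset of the cone $P$; (e) for every $y\in S$ and $x\in X$, if $x=Ax+By$ then $x\in S$. Then the operator $A+B$ has a fixed point in $S$, i.e. there exists $z^*\in S$ with $Az^*+Bz^*=z^*$.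
   Context: $X$ is a real Banach space. A cone $P\subseteq X$ is a subset that is closed, nonempty, $P\neq\{0\}$, satisfies $\alpha x+\beta y\in P$ for all $x,y\in P$ and all reals $\alpha,\beta\ge 0$, and $P\cap(-P)=\{0\}$; it is assumed that $P$ has nonempty interior. The partial order is defined by $x\preceq y$ iff $y-x\in P$ (and $x\succeq y$ means $y\preceq x$); the paper refers to $P$ as the positive cone. The partially ordered Banach space $(X,\|\cdot\|,\preceq)$ has the upper comparable property if for every $x,y\in X$ there exists $z\in X$ with $x\preceq z$ and $y\preceq z$. A function $\psi:[0,\infty)\to[0,\infty)$ is a generalized altering distance function if it is lower semi-continuous and non-decreasing, and $\psi(t)=0$ if and only if $t=0$. $I$ denotes the identity operator on $X$. *)

theory Defs
  imports "HOL-Analysis.Analysis"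
begin

definition is_cone :: "'a::real_normed_vector set \<Rightarrow> bool" where
  "is_cone P \<longleftrightarrow> closed P \<and> P \<noteq> {} \<and> P \<noteq> {0}
     \<and> (\<forall>x\<in>P. \<forall>y\<in>P. \<forall>a b :: real. a \<ge> 0 \<longrightarrow> b \<ge> 0 \<longrightarrow> a *\<^sub>R x + b *\<^sub>R y \<in> P)
     \<and> P \<inter> uminus ` P = {0}"

definition cone_le :: "'a::real_normed_vector set \<Rightarrow> 'a \<Rightarrow> 'a \<Rightarrow> bool" where
  "cone_le P x y \<longleftrightarrow> y - x \<in> P"

definition upper_comparable :: "'a::real_normed_vector set \<Rightarrow> bool" where
  "upper_comparable P \<longleftrightarrow> (\<forall>x y. \<exists>z. cone_le P x z \<and> cone_le P y z)"

definition lsc_on :: "real set \<Rightarrow> (real \<Rightarrow> real) \<Rightarrow> bool" where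
  "lsc_on S f \<longleftrightarrow> (\<forall>x\<in>S. \<forall>c. c < f x \<longrightarrow> (\<forall>\<^sub>F y in at x within S. c < f y))"

definition usc_on :: "real set \<Rightarrow> (real \<Rightarrow> real) \<Rightarrow> bool" where
  "usc_on S f \<longleftrightarrow> (\<forall>x\<in>S. \<forall>c. f x < c \<longrightarrow> (\<forall>\<^sub>F y in at x within S. f y < c))"

definition gen_altering_distance :: "(real \<Rightarrow> real) \<Rightarrow> bool" where
  "gen_altering_distance \<psi> \<longleftrightarrow> (\<forall>t\<ge>0. \<psi> t \<ge> 0) \<and> lsc_on {0..} \<psi> \<and> mono_on {0..} \<psi>
     \<and> (\<forall>t\<ge>0. \<psi> t = 0 \<longleftrightarrow> t = 0)"

end

theory Submission
  imports Defs
begin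

(* Only hypotheses (c)-(e) are needed: T = (I - A)^-1 o B maps S into itself (by (e)), is
   continuous, and has relatively compact range (the continuous image under (I - A)^-1 of the
   compact set containing B(S)), so Schauder's theorem gives z = T z, i.e. z - A z = B z.

   Schauder's theorem is derived from Kuhn's combinatorial lemma, which gives approximate
   fixed points on the cube [0,1]^n for every n (dimension is a parameter, not a type).  These
   are moved to the corner simplex by a Lipschitz retraction, and then to a compact-range map T
   on a convex set by Schauder's projection onto the convex hull of a finite eps-net. *)

definition unit_cube :: "nat \<Rightarrow> (nat \<Rightarrow> real) set" where
  "unit_cube n = {t. \<forall>i<n. 0 \<le> t i \<and> t i \<le> 1}"

definition coord_uniformly_continuous_on ::
    "nat \<Rightarrow> (nat \<Rightarrow> real) set \<Rightarrow> ((nat \<Rightarrow> real) \<Rightarrow> nat \<Rightarrow> real) \<Rightarrow> bool" where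
  "coord_uniformly_continuous_on n C g \<longleftrightarrow>
     (\<forall>e>0. \<exists>d>0. \<forall>s\<in>C. \<forall>t\<in>C. (\<forall>i<n. \<bar>s i - t i\<bar> < d) \<longrightarrow> (\<forall>i<n. \<bar>g s i - g t i\<bar> < e))"

definition grid_point :: "nat \<Rightarrow> (nat \<Rightarrow> nat) \<Rightarrow> nat \<Rightarrow> real" where
  "grid_point p x = (\<lambda>i. real (x i) / real p)"

lemma grid_point_in_unit_cube:
  "0 < p \<Longrightarrow> \<forall>i<n. x i \<le> p \<Longrightarrow> grid_point p x \<in> unit_cube n"
  by (auto simp: unit_cube_def grid_point_def field_simps)

lemma grid_point_cell:
  assumes "0 < p" "\<forall>j<n. q j < p" "\<forall>j<n. q j \<le> r j \<and> r j \<le> q j + 1"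
  shows "grid_point p r \<in> unit_cube n"
    and "\<forall>i<n. \<bar>grid_point p r i - grid_point p q i\<bar> \<le> inverse (real p)"
proof -
  show "grid_point p r \<in> unit_cube n"
  proof (rule grid_point_in_unit_cube[OF \<open>0 < p\<close>], intro allI impI)
    fix i assume "i < n"
    then have "q i < p" "r i \<le> q i + 1" using assms(2,3) by auto
    then show "r i \<le> p" by linarith
  qed
  show "\<forall>i<n. \<bar>grid_point p r i - grid_point p q i\<bar> \<le> inverse (real p)"
  proof (intro allI impI)
    fix i assume "i < n"
    then have "0 \<le> real (r i) - real (q i)" "real (r i) - real (q i) \<le> 1"
      using assms(3) by auto
    moreover have "grid_point p r i - grid_point p q i = (real (r i) - real (q i)) / real p"
      by (simp add: grid_point_def diff_divide_distrib)
    ultimately show "\<bar>grid_point p r i - grid_point p q i\<bar> \<le> inverse (real p)"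
      by (simp add: inverse_eq_divide divide_right_mono)
  qed
qed

lemma approx_fixpoint_unit_cube:
  assumes maps: "g ` unit_cube n \<subseteq> unit_cube n"
    and uc: "coord_uniformly_continuous_on n (unit_cube n) g" and "0 < e"
  obtains t where "t \<in> unit_cube n" "\<forall>i<n. \<bar>g t i - t i\<bar> < e"
proof -
  obtain d where "0 < d" and d: "\<forall>s\<in>unit_cube n. \<forall>t\<in>unit_cube n.
      (\<forall>j<n. \<bar>s j - t j\<bar> < d) \<longrightarrow> (\<forall>i<n. \<bar>g s i - g t i\<bar> < e/2)"
    using uc[unfolded coord_uniformly_continuous_on_def, rule_format, of "e/2"] \<open>0 < e\<close> by auto
  obtain p :: nat where "0 < p" and p: "inverse (real p) < min d (e/2)"
    using ex_inverse_of_nat_less[of "min d (e/2)"] \<open>0 < d\<close> \<open>0 < e\<close> by auto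
  define label where "label x i =
    (if grid_point p x i < 1 \<and> grid_point p x i \<le> g (grid_point p x) i then 0 else 1::nat)" for x i
  obtain q where q: "\<forall>i<n. q i < p"
    and cell: "\<forall>i<n. \<exists>r s. (\<forall>j<n. q j \<le> r j \<and> r j \<le> q j + 1) \<and>
                 (\<forall>j<n. q j \<le> s j \<and> s j \<le> q j + 1) \<and> label r i \<noteq> label s i"
  proof (rule kuhn_lemma[of p n label])
    show "\<forall>x. (\<forall>i<n. x i \<le> p) \<longrightarrow> (\<forall>i<n. x i = 0 \<longrightarrow> label x i = 0)"
    proof (intro allI impI)
      fix x i assume x: "\<forall>i<n. x i \<le> p" and "i < n" "x i = 0"
      have "g (grid_point p x) \<in> unit_cube n"
        using maps grid_point_in_unit_cube[OF \<open>0 < p\<close> x] by blast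
      with \<open>i < n\<close> \<open>x i = 0\<close> show "label x i = 0"
        by (simp add: label_def grid_point_def unit_cube_def)
    qed
    show "\<forall>x. (\<forall>i<n. x i \<le> p) \<longrightarrow> (\<forall>i<n. x i = p \<longrightarrow> label x i = 1)"
      using \<open>0 < p\<close> by (auto simp: label_def grid_point_def)
  qed (auto simp: \<open>0 < p\<close> label_def)
  define z where "z = grid_point p q"
  have z: "z \<in> unit_cube n"
    unfolding z_def using \<open>0 < p\<close> q by (intro grid_point_in_unit_cube) (auto intro: less_imp_le)
  have "\<bar>g z i - z i\<bar> < e" if "i < n" for i
  proof -
    obtain r s where r: "\<forall>j<n. q j \<le> r j \<and> r j \<le> q j + 1"
      and s: "\<forall>j<n. q j \<le> s j \<and> s j \<le> q j + 1" and "label r i \<noteq> label s i"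
      using cell \<open>i < n\<close> by blast
    \<comment> \<open>Across the cell, g i - t i changes sign, and the cell is small.\<close>
    have near: "\<bar>g (grid_point p v) i - g z i\<bar> < e/2" "\<bar>grid_point p v i - z i\<bar> < e/2"
      if "\<forall>j<n. q j \<le> v j \<and> v j \<le> q j + 1" for v
      using grid_point_cell[OF \<open>0 < p\<close> q that] d z \<open>i < n\<close> p unfolding z_def by fastforce+
    have range: "0 \<le> g (grid_point p v) i \<and> g (grid_point p v) i \<le> 1"
      if "\<forall>j<n. q j \<le> v j \<and> v j \<le> q j + 1" for v
      using grid_point_cell(1)[OF \<open>0 < p\<close> q that] maps \<open>i < n\<close> by (auto simp: unit_cube_def)
    have "grid_point p r i \<le> g (grid_point p r) i \<and> g (grid_point p s) i \<le> grid_point p s i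
        \<or> g (grid_point p r) i \<le> grid_point p r i \<and> grid_point p s i \<le> g (grid_point p s) i"
      using \<open>label r i \<noteq> label s i\<close> range[OF r] range[OF s]
      by (auto simp: label_def split: if_splits)
    then show ?thesis
      using near[OF r] near[OF s] unfolding abs_less_iff by linarith
  qed
  with z that show ?thesis by blast
qed

definition corner_simplex :: "nat \<Rightarrow> (nat \<Rightarrow> real) set" where
  "corner_simplex n = {l. (\<forall>i<n. 0 \<le> l i) \<and> (\<Sum>i<n. l i) \<le> 1}"

definition simplex_retraction :: "nat \<Rightarrow> (nat \<Rightarrow> real) \<Rightarrow> nat \<Rightarrow> real" where
  "simplex_retraction n t = (\<lambda>i. t i / max 1 (\<Sum>j<n. t j))"

lemma corner_simplex_subset_unit_cube: "corner_simplex n \<subseteq> unit_cube n"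
proof
  fix l assume l: "l \<in> corner_simplex n"
  have "l i \<le> 1" if "i < n" for i
  proof -
    have "l i \<le> (\<Sum>j<n. l j)"
      using l that by (intro member_le_sum) (auto simp: corner_simplex_def)
    with l show ?thesis by (simp add: corner_simplex_def)
  qed
  with l show "l \<in> unit_cube n" by (simp add: corner_simplex_def unit_cube_def)
qed

lemma simplex_retraction_in_corner_simplex:
  assumes "t \<in> unit_cube n"
  shows "simplex_retraction n t \<in> corner_simplex n"
proof -
  have "(\<Sum>i<n. simplex_retraction n t i) = (\<Sum>i<n. t i) / max 1 (\<Sum>j<n. t j)"
    by (simp add: simplex_retraction_def sum_divide_distrib)
  also have "\<dots> \<le> 1" by simp
  finally show ?thesis
    using assms by (simp add: corner_simplex_def unit_cube_def simplex_retraction_def)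
qed

lemma simplex_retraction_fixes_corner_simplex:
  "l \<in> corner_simplex n \<Longrightarrow> simplex_retraction n l = l"
  by (simp add: corner_simplex_def simplex_retraction_def max_absorb1)

lemma abs_quotient_diff_le:
  fixes a a' D D' c :: real
  assumes "0 < c" "c \<le> D" "c \<le> D'" "0 \<le> a'" "a' \<le> D'"
  shows "\<bar>a / D - a' / D'\<bar> \<le> (\<bar>a - a'\<bar> + \<bar>D - D'\<bar>) / c"
proof -
  have "a / D - a' / D' = (a - a') / D + (a' / D') * ((D' - D) / D)"
    using assms by (simp add: field_simps)
  also have "\<bar>\<dots>\<bar> \<le> \<bar>a - a'\<bar> / D + (a' / D') * (\<bar>D' - D\<bar> / D)"
    using assms by (auto simp: abs_mult intro!: order_trans[OF abs_triangle_ineq])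
  also have "\<dots> \<le> \<bar>a - a'\<bar> / c + 1 * (\<bar>D' - D\<bar> / c)"
    using assms by (intro add_mono mult_mono divide_left_mono) auto
  finally show ?thesis by (simp add: add_divide_distrib abs_minus_commute)
qed

lemma simplex_retraction_lipschitz:
  assumes "t \<in> unit_cube n" "\<forall>j<n. \<bar>s j - t j\<bar> \<le> d" "i < n"
  shows "\<bar>simplex_retraction n s i - simplex_retraction n t i\<bar> \<le> (real n + 1) * d"
proof -
  have "\<bar>max 1 (\<Sum>j<n. s j) - max 1 (\<Sum>j<n. t j)\<bar> \<le> \<bar>\<Sum>j<n. s j - t j\<bar>"
    by (auto simp: max_def abs_if sum_subtractf)
  also have "\<dots> \<le> (\<Sum>j<n. \<bar>s j - t j\<bar>)" by (rule sum_abs)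
  also have "\<dots> \<le> real n * d"
    using sum_mono[of "{..<n}" "\<lambda>j. \<bar>s j - t j\<bar>" "\<lambda>_. d"] assms(2) by simp
  finally have "\<bar>max 1 (\<Sum>j<n. s j) - max 1 (\<Sum>j<n. t j)\<bar> \<le> real n * d" .
  moreover have "\<bar>simplex_retraction n s i - simplex_retraction n t i\<bar>
      \<le> (\<bar>s i - t i\<bar> + \<bar>max 1 (\<Sum>j<n. s j) - max 1 (\<Sum>j<n. t j)\<bar>) / 1"
    unfolding simplex_retraction_def
    using assms(1,3) by (intro abs_quotient_diff_le) (auto simp: unit_cube_def)
  moreover have "\<bar>s i - t i\<bar> \<le> d" using assms(2,3) by blast
  ultimately show ?thesis by (simp add: algebra_simps)
qed

lemma coord_uniformly_continuous_on_retraction_comp: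
  assumes "coord_uniformly_continuous_on n (corner_simplex n) g"
  shows "coord_uniformly_continuous_on n (unit_cube n) (g \<circ> simplex_retraction n)"
  unfolding coord_uniformly_continuous_on_def
proof (intro allI impI)
  fix e :: real assume "0 < e"
  then obtain d where "0 < d" and d: "\<forall>s\<in>corner_simplex n. \<forall>t\<in>corner_simplex n.
      (\<forall>i<n. \<bar>s i - t i\<bar> < d) \<longrightarrow> (\<forall>i<n. \<bar>g s i - g t i\<bar> < e)"
    using assms unfolding coord_uniformly_continuous_on_def by blast
  have "\<forall>i<n. \<bar>g (simplex_retraction n s) i - g (simplex_retraction n t) i\<bar> < e"
    if "s \<in> unit_cube n" "t \<in> unit_cube n" "\<forall>i<n. \<bar>s i - t i\<bar> < d / (real n + 2)" for s t
  proof -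
    have close: "\<forall>j<n. \<bar>s j - t j\<bar> \<le> d / (real n + 2)"
      using that(3) by (simp add: less_imp_le)
    have "\<bar>simplex_retraction n s i - simplex_retraction n t i\<bar> < d" if "i < n" for i
    proof -
      have "\<bar>simplex_retraction n s i - simplex_retraction n t i\<bar> \<le> (real n + 1) * (d / (real n + 2))"
        by (rule simplex_retraction_lipschitz[OF \<open>t \<in> unit_cube n\<close> close that])
      also have "\<dots> < d" using \<open>0 < d\<close> by (simp add: field_simps)
      finally show ?thesis .
    qed
    then show ?thesis
      using d simplex_retraction_in_corner_simplex that(1,2) by simp
  qed
  then show "\<exists>d>0. \<forall>s\<in>unit_cube n. \<forall>t\<in>unit_cube n. (\<forall>i<n. \<bar>s i - t i\<bar> < d) \<longrightarrow>
      (\<forall>i<n. \<bar>(g \<circ> simplex_retraction n) s i - (g \<circ> simplex_retraction n) t i\<bar> < e)"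
    using \<open>0 < d\<close> by (intro exI[of _ "d / (real n + 2)"]) auto
qed

lemma approx_fixpoint_corner_simplex:
  assumes maps: "g ` corner_simplex n \<subseteq> corner_simplex n"
    and uc: "coord_uniformly_continuous_on n (corner_simplex n) g" and "0 < e"
  obtains l where "l \<in> corner_simplex n" "\<forall>i<n. \<bar>g l i - l i\<bar> < e"
proof -
  define h where "h = g \<circ> simplex_retraction n"
  have h_maps: "h t \<in> corner_simplex n" if "t \<in> unit_cube n" for t
    using maps simplex_retraction_in_corner_simplex[OF that] by (auto simp: h_def)
  have "h ` unit_cube n \<subseteq> unit_cube n"
    using h_maps corner_simplex_subset_unit_cube by blast
  moreover have "coord_uniformly_continuous_on n (unit_cube n) h"
    unfolding h_def using uc by (rule coord_uniformly_continuous_on_retraction_comp)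
  moreover have "0 < e / (real n + 2)" using \<open>0 < e\<close> by simp
  ultimately obtain t where t: "t \<in> unit_cube n" "\<forall>i<n. \<bar>h t i - t i\<bar> < e / (real n + 2)"
    by (rule approx_fixpoint_unit_cube)
  \<comment> \<open>w = h t lies in the simplex, where the retraction is the identity.\<close>
  define w where "w = h t"
  have w: "w \<in> corner_simplex n" using h_maps t(1) by (simp add: w_def)
  have "\<forall>i<n. \<bar>g (simplex_retraction n t) i - simplex_retraction n t i\<bar> < e"
  proof (intro allI impI)
    fix i assume "i < n"
    have "\<forall>j<n. \<bar>t j - w j\<bar> \<le> e / (real n + 2)"
      using t(2) by (simp add: w_def abs_minus_commute less_imp_le)
    with w have "\<bar>simplex_retraction n t i - simplex_retraction n w i\<bar> \<le> (real n + 1) * (e / (real n + 2))"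
      using corner_simplex_subset_unit_cube \<open>i < n\<close> by (intro simplex_retraction_lipschitz) auto
    also have "\<dots> < e" using \<open>0 < e\<close> by (simp add: field_simps)
    finally show "\<bar>g (simplex_retraction n t) i - simplex_retraction n t i\<bar> < e"
      using simplex_retraction_fixes_corner_simplex[OF w] by (simp add: w_def h_def abs_minus_commute)
  qed
  then show ?thesis
    using that[of "simplex_retraction n t"] simplex_retraction_in_corner_simplex[OF t(1)] by simp
qed

lemma compact_finite_eps_net:
  fixes K :: "'a::metric_space set"
  assumes "compact K" "K \<noteq> {}" "0 < r"
  obtains n :: nat and y where "\<forall>j\<le>n. y j \<in> K" "\<forall>z\<in>K. \<exists>j\<le>n. dist z (y j) < r"
proof -
  obtain F where F: "F \<subseteq> K" "finite F" "K \<subseteq> (\<Union>c\<in>F. ball c r)"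
    using compactE_image[OF \<open>compact K\<close>, of K "\<lambda>c. ball c r"] \<open>0 < r\<close> by force
  obtain m :: nat and y where Fy: "F = y ` {i. i < m}"
    using finite_imp_nat_seg_image_inj_on[OF \<open>finite F\<close>] by blast
  have "0 < m" using F(3) \<open>K \<noteq> {}\<close> Fy by (cases m) auto
  then have "{i. i < m} = {..m - 1}" by auto
  have "\<forall>j\<le>m - 1. y j \<in> K"
    using F(1) Fy \<open>{i. i < m} = {..m - 1}\<close> by auto
  moreover have "\<forall>z\<in>K. \<exists>j\<le>m - 1. dist z (y j) < r"
  proof
    fix z assume "z \<in> K"
    then obtain c where c: "c \<in> F" "dist c z < r" using F(3) by auto
    then obtain j where "j < m" "c = y j" using Fy by auto
    with c show "\<exists>j\<le>m - 1. dist z (y j) < r"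
      by (intro exI[of _ j]) (auto simp: dist_commute)
  qed
  ultimately show ?thesis by (rule that)
qed

definition simplex_point :: "(nat \<Rightarrow> 'a::real_vector) \<Rightarrow> nat \<Rightarrow> (nat \<Rightarrow> real) \<Rightarrow> 'a" where
  "simplex_point y n l = y n + (\<Sum>i<n. l i *\<^sub>R (y i - y n))"

lemma simplex_point_eq_convex_combination:
  "simplex_point y n l = (\<Sum>j\<le>n. (if j = n then 1 - (\<Sum>i<n. l i) else l j) *\<^sub>R y j)"
proof -
  have "(\<Sum>j\<le>n. (if j = n then 1 - (\<Sum>i<n. l i) else l j) *\<^sub>R y j)
      = (1 - (\<Sum>i<n. l i)) *\<^sub>R y n + (\<Sum>i<n. l i *\<^sub>R y i)"
    by (simp add: lessThan_Suc_atMost[symmetric])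
  then show ?thesis
    by (simp add: simplex_point_def scaleR_diff_right sum_subtractf scaleR_sum_left algebra_simps)
qed

lemma simplex_point_in_convex_hull:
  assumes "l \<in> corner_simplex n"
  shows "simplex_point y n l \<in> convex hull (y ` {..n})"
  unfolding simplex_point_eq_convex_combination
proof (rule convex_sum)
  show "(\<Sum>j\<le>n. if j = n then 1 - (\<Sum>i<n. l i) else l j) = 1"
    by (simp add: lessThan_Suc_atMost[symmetric])
  show "0 \<le> (if j = n then 1 - (\<Sum>i<n. l i) else l j)" if "j \<in> {..n}" for j
    using assms that by (auto simp: corner_simplex_def)
qed (auto intro: hull_inc)

lemma simplex_point_lipschitz:
  fixes y :: "nat \<Rightarrow> 'a::real_normed_vector"
  assumes "\<forall>i<n. \<bar>l i - l' i\<bar> \<le> d"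
  shows "norm (simplex_point y n l - simplex_point y n l') \<le> d * (\<Sum>i<n. norm (y i - y n))"
proof -
  have "simplex_point y n l - simplex_point y n l' = (\<Sum>i<n. (l i - l' i) *\<^sub>R (y i - y n))"
    by (simp add: simplex_point_def sum_subtractf scaleR_diff_left)
  also have "norm \<dots> \<le> (\<Sum>i<n. \<bar>l i - l' i\<bar> * norm (y i - y n))"
    by (rule norm_sum[THEN order_trans]) simp
  also have "\<dots> \<le> (\<Sum>i<n. d * norm (y i - y n))"
    using assms by (intro sum_mono mult_right_mono) auto
  finally show ?thesis by (simp add: sum_distrib_left)
qed

text \<open>Schauder's partition of unity subordinate to the balls of radius 2r around an r-net.\<close>

locale eps_net =
  fixes K :: "'a::real_normed_vector set" and r :: real and n :: nat and y :: "nat \<Rightarrow> 'a"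
  assumes radius_pos: "0 < r"
    and covers: "\<And>z. z \<in> K \<Longrightarrow> \<exists>j\<le>n. dist z (y j) < r"
begin

definition bump :: "nat \<Rightarrow> 'a \<Rightarrow> real" where
  "bump j z = max 0 (2 * r - dist z (y j))"

definition weight :: "nat \<Rightarrow> 'a \<Rightarrow> real" where
  "weight j z = bump j z / (\<Sum>k\<le>n. bump k z)"

definition projection :: "'a \<Rightarrow> 'a" where
  "projection z = (\<Sum>j\<le>n. weight j z *\<^sub>R y j)"

lemma bump_nonneg: "0 \<le> bump j z"
  by (simp add: bump_def)

lemma bump_lipschitz: "\<bar>bump j z - bump j z'\<bar> \<le> dist z z'"
  using abs_dist_diff_le[of z "y j" z'] by (auto simp: bump_def dist_commute max_def abs_le_iff)

lemma bump_sum_ge: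
  assumes "z \<in> K"
  shows "r \<le> (\<Sum>k\<le>n. bump k z)"
proof -
  obtain j where "j \<le> n" "dist z (y j) < r" using covers[OF assms] by blast
  then have "r \<le> bump j z" by (simp add: bump_def)
  also have "\<dots> \<le> (\<Sum>k\<le>n. bump k z)"
    using \<open>j \<le> n\<close> by (intro member_le_sum bump_nonneg) auto
  finally show ?thesis .
qed

lemma weight_nonneg: "0 \<le> weight j z"
  by (simp add: weight_def bump_nonneg sum_nonneg)

lemma weight_sum: "z \<in> K \<Longrightarrow> (\<Sum>j\<le>n. weight j z) = 1"
  using bump_sum_ge[of z] radius_pos by (simp add: weight_def flip: sum_divide_distrib)

lemma weight_lipschitz:
  assumes "z \<in> K" "z' \<in> K" "j \<le> n"
  shows "\<bar>weight j z - weight j z'\<bar> \<le> (real n + 2) / r * dist z z'"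
proof -
  have "\<bar>(\<Sum>k\<le>n. bump k z) - (\<Sum>k\<le>n. bump k z')\<bar> \<le> (\<Sum>k\<le>n. \<bar>bump k z - bump k z'\<bar>)"
    by (simp add: sum_abs[THEN order_trans] flip: sum_subtractf)
  also have "\<dots> \<le> (\<Sum>k\<le>n. dist z z')"
    by (intro sum_mono bump_lipschitz)
  also have "\<dots> = (real n + 1) * dist z z'" by simp
  finally have sum_diff: "\<bar>(\<Sum>k\<le>n. bump k z) - (\<Sum>k\<le>n. bump k z')\<bar> \<le> (real n + 1) * dist z z'" .
  have "bump j z' \<le> (\<Sum>k\<le>n. bump k z')"
    using \<open>j \<le> n\<close> by (intro member_le_sum bump_nonneg) auto
  then have "\<bar>weight j z - weight j z'\<bar>
      \<le> (\<bar>bump j z - bump j z'\<bar> + \<bar>(\<Sum>k\<le>n. bump k z) - (\<Sum>k\<le>n. bump k z')\<bar>) / r"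
    unfolding weight_def using radius_pos bump_sum_ge assms(1,2) bump_nonneg
    by (intro abs_quotient_diff_le) auto
  also have "\<dots> \<le> (dist z z' + (real n + 1) * dist z z') / r"
    using radius_pos sum_diff bump_lipschitz by (intro divide_right_mono add_mono) auto
  finally show ?thesis by (simp add: algebra_simps)
qed

lemma dist_projection_le:
  assumes "z \<in> K"
  shows "dist (projection z) z \<le> 2 * r"
proof -
  have "projection z - z = (\<Sum>j\<le>n. weight j z *\<^sub>R (y j - z))"
    using weight_sum[OF assms]
    by (simp add: projection_def scaleR_diff_right sum_subtractf flip: scaleR_sum_left)
  then have "dist (projection z) z = norm (\<Sum>j\<le>n. weight j z *\<^sub>R (y j - z))"
    by (simp add: dist_norm)
  also have "\<dots> \<le> (\<Sum>j\<le>n. norm (weight j z *\<^sub>R (y j - z)))"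
    by (rule norm_sum)
  also have "\<dots> \<le> (\<Sum>j\<le>n. weight j z * (2 * r))"
  proof (rule sum_mono)
    fix j
    show "norm (weight j z *\<^sub>R (y j - z)) \<le> weight j z * (2 * r)"
    proof (cases "dist z (y j) < 2 * r")
      case True
      then show ?thesis
        using weight_nonneg[of j z] by (simp add: dist_norm norm_minus_commute mult_left_mono)
    next
      case False
      then show ?thesis by (simp add: weight_def bump_def)
    qed
  qed
  also have "\<dots> = 2 * r" using weight_sum[OF assms] by (simp flip: sum_distrib_right)
  finally show ?thesis .
qed

lemma simplex_point_weight_eq_projection:
  "z \<in> K \<Longrightarrow> simplex_point y n (\<lambda>i. weight i z) = projection z"
  using weight_sum[of z]
  by (simp add: simplex_point_eq_convex_combination projection_def lessThan_Suc_atMost[symmetric]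
      cong: if_cong)

lemma weight_in_corner_simplex:
  assumes "z \<in> K"
  shows "(\<lambda>i. weight i z) \<in> corner_simplex n"
proof -
  have "(\<Sum>i<n. weight i z) + weight n z = 1"
    using weight_sum[OF assms] by (simp add: lessThan_Suc_atMost[symmetric])
  then have "(\<Sum>i<n. weight i z) \<le> 1"
    using weight_nonneg[of n z] by linarith
  then show ?thesis by (simp add: corner_simplex_def weight_nonneg)
qed

lemma coord_uniformly_continuous_weight_comp:
  assumes "compact H" "continuous_on H T" "T ` H \<subseteq> K"
    and "simplex_point y n ` corner_simplex n \<subseteq> H"
  shows "coord_uniformly_continuous_on n (corner_simplex n) (\<lambda>l i. weight i (T (simplex_point y n l)))"
  unfolding coord_uniformly_continuous_on_def
proof (intro allI impI)
  fix e :: real assume "0 < e"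
  define Y where "Y = (\<Sum>i<n. norm (y i - y n))"
  have "0 \<le> Y" by (simp add: Y_def sum_nonneg)
  have "uniformly_continuous_on H T"
    using assms(1,2) by (simp add: compact_uniformly_continuous)
  moreover have "0 < e * r / (real n + 2)" using \<open>0 < e\<close> radius_pos by simp
  ultimately obtain \<delta> where "0 < \<delta>" and \<delta>: "\<And>x x'. x \<in> H \<Longrightarrow> x' \<in> H \<Longrightarrow> dist x' x < \<delta>
      \<Longrightarrow> dist (T x') (T x) < e * r / (real n + 2)"
    unfolding uniformly_continuous_on_def by metis
  have "\<bar>weight i (T (simplex_point y n s)) - weight i (T (simplex_point y n t))\<bar> < e"
    if "s \<in> corner_simplex n" "t \<in> corner_simplex n" "\<forall>i<n. \<bar>s i - t i\<bar> < \<delta> / (Y + 1)" "i < n"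
    for s t i
  proof -
    have "\<forall>i<n. \<bar>s i - t i\<bar> \<le> \<delta> / (Y + 1)"
      using that(3) by (simp add: less_imp_le)
    then have "dist (simplex_point y n s) (simplex_point y n t) \<le> \<delta> / (Y + 1) * Y"
      unfolding dist_norm Y_def by (rule simplex_point_lipschitz)
    also have "\<dots> < \<delta>" using \<open>0 < \<delta>\<close> \<open>0 \<le> Y\<close> by (simp add: field_simps)
    finally have close: "dist (T (simplex_point y n s)) (T (simplex_point y n t)) < e * r / (real n + 2)"
      using \<delta> assms(4) that(1,2) by blast
    have "\<bar>weight i (T (simplex_point y n s)) - weight i (T (simplex_point y n t))\<bar>
        \<le> (real n + 2) / r * dist (T (simplex_point y n s)) (T (simplex_point y n t))"
      using assms(3,4) that by (intro weight_lipschitz) auto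
    also have "\<dots> < (real n + 2) / r * (e * r / (real n + 2))"
      using close radius_pos by (intro mult_strict_left_mono) auto
    also have "\<dots> = e" using radius_pos by simp
    finally show ?thesis .
  qed
  then show "\<exists>d>0. \<forall>s\<in>corner_simplex n. \<forall>t\<in>corner_simplex n. (\<forall>i<n. \<bar>s i - t i\<bar> < d) \<longrightarrow>
      (\<forall>i<n. \<bar>weight i (T (simplex_point y n s)) - weight i (T (simplex_point y n t))\<bar> < e)"
    using \<open>0 < \<delta>\<close> \<open>0 \<le> Y\<close> by (intro exI[of _ "\<delta> / (Y + 1)"]) auto
qed

end

lemma approx_fixpoint_compact_range:
  fixes T :: "'a::real_normed_vector \<Rightarrow> 'a"
  assumes "convex S" "continuous_on S T" "compact K" "K \<subseteq> S" "T ` S \<subseteq> K" "K \<noteq> {}" "0 < \<epsilon>"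
  obtains x where "x \<in> S" "dist (T x) x < \<epsilon>"
proof -
  have "0 < \<epsilon> / 4" using \<open>0 < \<epsilon>\<close> by simp
  then obtain n :: nat and y where y: "\<forall>j\<le>n. y j \<in> K" and net: "\<forall>z\<in>K. \<exists>j\<le>n. dist z (y j) < \<epsilon> / 4"
    by (rule compact_finite_eps_net[OF \<open>compact K\<close> \<open>K \<noteq> {}\<close>])
  interpret eps_net K "\<epsilon> / 4" n y
    using net \<open>0 < \<epsilon> / 4\<close> by unfold_locales auto
  define H where "H = convex hull (y ` {..n})"
  have "H \<subseteq> S"
    unfolding H_def using y \<open>K \<subseteq> S\<close> \<open>convex S\<close> by (intro hull_minimal) auto
  have "compact H"
    unfolding H_def by (simp add: finite_imp_compact_convex_hull)
  have points_in_H: "simplex_point y n ` corner_simplex n \<subseteq> H"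
    unfolding H_def using simplex_point_in_convex_hull by blast
  have TH: "T ` H \<subseteq> K" using \<open>H \<subseteq> S\<close> \<open>T ` S \<subseteq> K\<close> by blast
  define g where "g l = (\<lambda>i. weight i (T (simplex_point y n l)))" for l
  define Y where "Y = (\<Sum>i<n. norm (y i - y n))"
  have "0 \<le> Y" by (simp add: Y_def sum_nonneg)
  have "g ` corner_simplex n \<subseteq> corner_simplex n"
    using points_in_H TH weight_in_corner_simplex by (auto simp: g_def)
  moreover have "coord_uniformly_continuous_on n (corner_simplex n) g"
    unfolding g_def
    using \<open>compact H\<close> continuous_on_subset[OF \<open>continuous_on S T\<close> \<open>H \<subseteq> S\<close>] TH points_in_H
    by (rule coord_uniformly_continuous_weight_comp)
  moreover have "0 < \<epsilon> / (2 * (Y + 1))" using \<open>0 < \<epsilon>\<close> \<open>0 \<le> Y\<close> by simp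
  ultimately obtain l where l: "l \<in> corner_simplex n" "\<forall>i<n. \<bar>g l i - l i\<bar> < \<epsilon> / (2 * (Y + 1))"
    by (rule approx_fixpoint_corner_simplex)
  define x where "x = simplex_point y n l"
  have "x \<in> S" using l(1) points_in_H \<open>H \<subseteq> S\<close> by (auto simp: x_def)
  then have "T x \<in> K" using \<open>T ` S \<subseteq> K\<close> by blast
  \<comment> \<open>The Schauder projection of T x is the point of H with coordinates g l, close to l.\<close>
  have "projection (T x) = simplex_point y n (g l)"
    using simplex_point_weight_eq_projection[OF \<open>T x \<in> K\<close>] by (simp add: g_def x_def)
  moreover have "\<forall>i<n. \<bar>g l i - l i\<bar> \<le> \<epsilon> / (2 * (Y + 1))"
    using l(2) by (simp add: less_imp_le)
  then have "norm (simplex_point y n (g l) - x) \<le> \<epsilon> / (2 * (Y + 1)) * Y"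
    unfolding x_def Y_def by (rule simplex_point_lipschitz)
  ultimately have "dist (projection (T x)) x \<le> \<epsilon> / (2 * (Y + 1)) * Y"
    by (simp add: dist_norm)
  also have "\<dots> < \<epsilon> / 2" using \<open>0 < \<epsilon>\<close> \<open>0 \<le> Y\<close> by (simp add: field_simps)
  finally have "dist (T x) x < \<epsilon>"
    using dist_projection_le[OF \<open>T x \<in> K\<close>] dist_triangle3[of "T x" x "projection (T x)"] by simp
  with \<open>x \<in> S\<close> show ?thesis by (rule that)
qed

theorem schauder_fixpoint:
  fixes T :: "'a::real_normed_vector \<Rightarrow> 'a"
  assumes "S \<noteq> {}" "closed S" "convex S" "continuous_on S T" "T ` S \<subseteq> S"
    and "compact C" "T ` S \<subseteq> C"
  shows "\<exists>z\<in>S. T z = z"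
proof -
  define K where "K = C \<inter> closure (T ` S)"
  have "compact K" unfolding K_def using \<open>compact C\<close> by (simp add: compact_Int_closed)
  have "K \<subseteq> S" unfolding K_def using closure_minimal[OF \<open>T ` S \<subseteq> S\<close> \<open>closed S\<close>] by blast
  have "T ` S \<subseteq> K" unfolding K_def using \<open>T ` S \<subseteq> C\<close> closure_subset by blast
  with \<open>S \<noteq> {}\<close> have "K \<noteq> {}" by blast
  have "\<exists>x\<in>S. dist (T x) x < inverse (real (Suc k))" for k
    using approx_fixpoint_compact_range[OF \<open>convex S\<close> \<open>continuous_on S T\<close> \<open>compact K\<close>
        \<open>K \<subseteq> S\<close> \<open>T ` S \<subseteq> K\<close> \<open>K \<noteq> {}\<close>, of "inverse (real (Suc k))"]
    by auto
  then obtain xs where xs: "\<And>k. xs k \<in> S" "\<And>k. dist (T (xs k)) (xs k) < inverse (real (Suc k))"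
    by metis
  have "\<forall>k. T (xs k) \<in> K" using xs(1) \<open>T ` S \<subseteq> K\<close> by blast
  then obtain z and r :: "nat \<Rightarrow> nat"
    where "z \<in> K" "strict_mono r" and "((\<lambda>k. T (xs k)) \<circ> r) \<longlonglongrightarrow> z"
    by (rule seq_compactE[OF compact_imp_seq_compact[OF \<open>compact K\<close>]])
  then have Tlim: "(\<lambda>k. T (xs (r k))) \<longlonglongrightarrow> z" by (simp add: o_def)
  have "(\<lambda>k. xs (r k) - T (xs (r k))) \<longlonglongrightarrow> 0"
  proof (rule Lim_null_comparison)
    show "\<forall>\<^sub>F k in sequentially. norm (xs (r k) - T (xs (r k))) \<le> inverse (real (Suc (r k)))"
      using xs(2) by (simp add: dist_norm norm_minus_commute less_imp_le)
    show "(\<lambda>k. inverse (real (Suc (r k)))) \<longlonglongrightarrow> 0"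
      using LIMSEQ_subseq_LIMSEQ[OF LIMSEQ_inverse_real_of_nat \<open>strict_mono r\<close>] by (simp add: o_def)
  qed
  with Tlim have "(\<lambda>k. xs (r k)) \<longlonglongrightarrow> z" by (rule Lim_transform)
  moreover have "z \<in> S" using \<open>z \<in> K\<close> \<open>K \<subseteq> S\<close> by blast
  ultimately have "(\<lambda>k. T (xs (r k))) \<longlonglongrightarrow> T z"
    using xs(1) by (intro continuous_on_tendsto_compose[OF \<open>continuous_on S T\<close>]) auto
  then have "T z = z" using Tlim by (rule LIMSEQ_unique)
  with \<open>z \<in> S\<close> show ?thesis by blast
qed

theorem theorem3p2:
  fixes P S :: "'a::banach set" and A B :: "'a \<Rightarrow> 'a"
    and \<psi> \<theta> \<phi> :: "real \<Rightarrow> real" and x0 :: 'a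
  assumes cone: "is_cone P" and int: "interior P \<noteq> {}"
    and upc: "upper_comparable P"
    and S: "S \<noteq> {}" "closed S" "convex S" "bounded S"
    and psi: "gen_altering_distance \<psi>"
    and theta: "\<forall>t\<ge>0. \<theta> t \<ge> 0" "usc_on {0..} \<theta>" "\<theta> 0 = 0"
    and phi: "\<forall>t\<ge>0. \<phi> t \<ge> 0" "lsc_on {0..} \<phi>" "\<phi> 0 = 0"
    and pos: "\<forall>t>0. \<psi> t - \<theta> t + \<phi> t > 0"
    and contr: "\<forall>x y. cone_le P y x \<longrightarrow>
                  \<psi> (norm (A x - A y)) \<le> \<theta> (norm (x - y)) - \<phi> (norm (x - y))"
    and x0: "cone_le P x0 (A x0)"
    and Acont: "continuous_on UNIV A"
    and Amono: "\<forall>x y. cone_le P x y \<longrightarrow> cone_le P (A x) (A y)"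
    and IA: "bij (\<lambda>x. x - A x)" "continuous_on UNIV (inv (\<lambda>x. x - A x))"
    and Bcont: "continuous_on S B"
    and Bcpt: "\<exists>K. compact K \<and> K \<subseteq> P \<and> B ` S \<subseteq> K"
    and e: "\<forall>y\<in>S. \<forall>x. x = A x + B y \<longrightarrow> x \<in> S"
  shows "\<exists>z\<in>S. A z + B z = z"
proof -
  define L where "L = (\<lambda>x::'a. x - A x)"
  have "surj L" using IA(1) unfolding L_def by (rule bij_is_surj)
  then have L_inv: "L (inv L u) = u" for u by (rule surj_f_inv_f)
  have "continuous_on UNIV (inv L)" using IA(2) unfolding L_def .
  define T where "T = inv L \<circ> B"
  have "T ` S \<subseteq> S"
  proof
    fix x assume "x \<in> T ` S"
    then obtain u where "u \<in> S" "x = T u" by blast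
    then have "x = A x + B u" using L_inv[of "B u"] by (simp add: T_def L_def algebra_simps)
    with e \<open>u \<in> S\<close> show "x \<in> S" by blast
  qed
  moreover have "continuous_on S T"
    unfolding T_def using Bcont continuous_on_subset[OF \<open>continuous_on UNIV (inv L)\<close>]
    by (intro continuous_on_compose) auto
  moreover obtain K where "compact K" "B ` S \<subseteq> K" using Bcpt by blast
  then have "compact (inv L ` K)" "T ` S \<subseteq> inv L ` K"
    using compact_continuous_image[OF continuous_on_subset[OF \<open>continuous_on UNIV (inv L)\<close>]]
    by (auto simp: T_def)
  ultimately obtain z where "z \<in> S" "T z = z"
    using schauder_fixpoint[OF S(1-3)] by blast
  then have "z - A z = B z" using L_inv[of "B z"] by (simp add: T_def L_def)
  then have "A z + B z = z" by (metis add.commute diff_add_cancel)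
  with \<open>z \<in> S\<close> show ?thesis by blast
qed

end
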